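(* Let $E$ be a pseudo effect algebra satisfying $\sigma$-(RDP). If $m$ is a $\sigma$-additive Jordan signed measure on $E$, then $m^+$, $m^-$ and $|m|$ are $\sigma$-additive.
   Context: Pseudo effect algebra: partial algebra $(E;+,0,1)$ such that for all $a,b,c$: (i) $a+b$ and $(a+b)+c$ exist iff $b+c$ and $a+(b+c)$ exist, and then they are equal; (ii) there is exactly one $d$ and one $e$ with $a+d=e+a=1$; (iii) if $a+b$ exists there are $d,e$ with $a+b=d+a=b+e$; (iv) if $1+a$ or $a+1$ exists then $a=0$. Order: $a\le b$ iff $a+c=b$ for some $c$. For a sequence $\{a_n\}$ such that $b_n=a_1+\cdots+a_n$ exists for all $n$, if $a=\bigvee_n b_n$ exists in $E$ we write $a=\sum_n a_n$. $E$ satisfies $\sigma$-(RDP) if whenever $a_1+a_2=\sum_n b_n$, there are sequences $\{c_{1n}\}_n,\{c_{2n}\}_n$ in $E$ with $a_i=\sum_n c_{in}$ ($i=1,2$) and $b_n=c_{1n}+c_{2n}$ for all $n$ (this implies (RDP)). Signed measure: $m:E\to\mathbb R$ additive on defined sums; measure: nonnegative one; $m$ is $\sigma$-additive if $a_1\le a_2\le\cdots$ with $a=\bigvee_na_n$ in $E$ implies $m(a)=\lim_n m(a_n)$. Jordan signed measure: difference of two measures; $\mathcal J(E)$ is their set ordered by $m_1\le^+m_2$ iff $m_2-m_1$ is a measure, a lattice-ordered group; $m^+:=m\vee0$, $m^-:=-(m\wedge0)$, $|m|:=m^++m^-$. *)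

theory Defs
  imports Complex_Main
begin

text \<open>A pseudo effect algebra is modelled on a whole type 'a, with the partial
  addition given as a function pl :: 'a => 'a => 'a option (None = undefined),
  a zero z and a unit u.\<close>

definition pea :: "('a \<Rightarrow> 'a \<Rightarrow> 'a option) \<Rightarrow> 'a \<Rightarrow> 'a \<Rightarrow> bool" where
  "pea pl z u \<longleftrightarrow>
     (\<forall>a b c. Option.bind (pl a b) (\<lambda>x. pl x c) = Option.bind (pl b c) (\<lambda>y. pl a y)) \<and>
     (\<forall>a. (\<exists>!d. pl a d = Some u) \<and> (\<exists>!e. pl e a = Some u)) \<and>
     (\<forall>a b s. pl a b = Some s \<longrightarrow> (\<exists>d e. pl d a = Some s \<and> pl b e = Some s)) \<and>
     (\<forall>a. (pl u a \<noteq> None \<or> pl a u \<noteq> None) \<longrightarrow> a = z)"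

definition pea_le :: "('a \<Rightarrow> 'a \<Rightarrow> 'a option) \<Rightarrow> 'a \<Rightarrow> 'a \<Rightarrow> bool" where
  "pea_le pl a b \<longleftrightarrow> (\<exists>c. pl a c = Some b)"

definition is_sup :: "('a \<Rightarrow> 'a \<Rightarrow> bool) \<Rightarrow> 'a set \<Rightarrow> 'a \<Rightarrow> bool" where
  "is_sup le S s \<longleftrightarrow> (\<forall>x\<in>S. le x s) \<and> (\<forall>v. (\<forall>x\<in>S. le x v) \<longrightarrow> le s v)"

fun psum :: "('a \<Rightarrow> 'a \<Rightarrow> 'a option) \<Rightarrow> (nat \<Rightarrow> 'a) \<Rightarrow> nat \<Rightarrow> 'a option" where
  "psum pl a 0 = Some (a 0)"
| "psum pl a (Suc n) = Option.bind (psum pl a n) (\<lambda>s. pl s (a (Suc n)))"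

definition sigma_sum :: "('a \<Rightarrow> 'a \<Rightarrow> 'a option) \<Rightarrow> (nat \<Rightarrow> 'a) \<Rightarrow> 'a \<Rightarrow> bool" where
  "sigma_sum pl a s \<longleftrightarrow> (\<forall>n. psum pl a n \<noteq> None) \<and>
     is_sup (pea_le pl) (range (\<lambda>n. the (psum pl a n))) s"

definition sigma_RDP :: "('a \<Rightarrow> 'a \<Rightarrow> 'a option) \<Rightarrow> bool" where
  "sigma_RDP pl \<longleftrightarrow> (\<forall>a1 a2 x b. pl a1 a2 = Some x \<and> sigma_sum pl b x \<longrightarrow>
     (\<exists>c1 c2. sigma_sum pl c1 a1 \<and> sigma_sum pl c2 a2 \<and>
              (\<forall>n. pl (c1 n) (c2 n) = Some (b n))))"

definition signed_measure :: "('a \<Rightarrow> 'a \<Rightarrow> 'a option) \<Rightarrow> ('a \<Rightarrow> real) \<Rightarrow> bool" where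
  "signed_measure pl m \<longleftrightarrow> (\<forall>a b c. pl a b = Some c \<longrightarrow> m c = m a + m b)"

definition is_measure :: "('a \<Rightarrow> 'a \<Rightarrow> 'a option) \<Rightarrow> ('a \<Rightarrow> real) \<Rightarrow> bool" where
  "is_measure pl m \<longleftrightarrow> signed_measure pl m \<and> (\<forall>a. 0 \<le> m a)"

definition sigma_additive :: "('a \<Rightarrow> 'a \<Rightarrow> 'a option) \<Rightarrow> ('a \<Rightarrow> real) \<Rightarrow> bool" where
  "sigma_additive pl m \<longleftrightarrow> (\<forall>a x. (\<forall>n. pea_le pl (a n) (a (Suc n))) \<and>
       is_sup (pea_le pl) (range a) x \<longrightarrow> (\<lambda>n. m (a n)) \<longlonglongrightarrow> m x)"

definition jordan :: "('a \<Rightarrow> 'a \<Rightarrow> 'a option) \<Rightarrow> ('a \<Rightarrow> real) set" where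
  "jordan pl = {m. \<exists>m1 m2. is_measure pl m1 \<and> is_measure pl m2 \<and> m = (\<lambda>a. m1 a - m2 a)}"

definition jle :: "('a \<Rightarrow> 'a \<Rightarrow> 'a option) \<Rightarrow> ('a \<Rightarrow> real) \<Rightarrow> ('a \<Rightarrow> real) \<Rightarrow> bool" where
  "jle pl m1 m2 \<longleftrightarrow> is_measure pl (\<lambda>a. m2 a - m1 a)"

definition jsup :: "('a \<Rightarrow> 'a \<Rightarrow> 'a option) \<Rightarrow> ('a \<Rightarrow> real) \<Rightarrow> ('a \<Rightarrow> real) \<Rightarrow> ('a \<Rightarrow> real)" where
  "jsup pl m1 m2 = (THE p. p \<in> jordan pl \<and> jle pl m1 p \<and> jle pl m2 p \<and>
      (\<forall>q\<in>jordan pl. jle pl m1 q \<and> jle pl m2 q \<longrightarrow> jle pl p q))"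

definition jinf :: "('a \<Rightarrow> 'a \<Rightarrow> 'a option) \<Rightarrow> ('a \<Rightarrow> real) \<Rightarrow> ('a \<Rightarrow> real) \<Rightarrow> ('a \<Rightarrow> real)" where
  "jinf pl m1 m2 = (THE p. p \<in> jordan pl \<and> jle pl p m1 \<and> jle pl p m2 \<and>
      (\<forall>q\<in>jordan pl. jle pl q m1 \<and> jle pl q m2 \<longrightarrow> jle pl q p))"

definition jpos :: "('a \<Rightarrow> 'a \<Rightarrow> 'a option) \<Rightarrow> ('a \<Rightarrow> real) \<Rightarrow> ('a \<Rightarrow> real)" where
  "jpos pl m = jsup pl m (\<lambda>_. 0)"

definition jneg :: "('a \<Rightarrow> 'a \<Rightarrow> 'a option) \<Rightarrow> ('a \<Rightarrow> real) \<Rightarrow> ('a \<Rightarrow> real)" where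
  "jneg pl m = (\<lambda>a. - jinf pl m (\<lambda>_. 0) a)"

definition jabs :: "('a \<Rightarrow> 'a \<Rightarrow> 'a option) \<Rightarrow> ('a \<Rightarrow> real) \<Rightarrow> ('a \<Rightarrow> real)" where
  "jabs pl m = (\<lambda>a. jpos pl m a + jneg pl m a)"

end

theory Submission
  imports Defs
begin

text \<open>For a Jordan signed measure m define its upper variation
  m^up(a) = sup {m b | b \<le> a}, which is finite because m = m1 - m2 with measures
  m1, m2 gives m b \<le> m1 a.  Using the Riesz decomposition property (a consequence
  of sigma-(RDP)) the upper variation is additive, hence a measure, and it is the
  least upper bound of m and 0 in (J(E), \<le>+); so m^+ = m^up.  Since q \<le>+ p iff
  -p \<le>+ -q, the meet with 0 is obtained by negation: m^- = (-m)^up.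
  The core of the proof is that m^up is sigma-additive whenever m is: if a n
  increases to x, write x as the sigma-sum of the increments d n of the chain;
  given b \<le> x with m b close to m^up(x), sigma-(RDP) splits b as a sigma-sum of
  pieces c n \<le> d n, so the partial sums of the c n lie below a n and, by
  sigma-additivity of m, eventually have m-value close to m^up(x).
  Finally |m| = m^+ + m^- is sigma-additive as a sum of sigma-additive maps.\<close>

lemma increments_of_chain:
  assumes "\<And>n. pea_le pl (a n) (a (Suc n))"
  obtains d where "\<And>n. psum pl d n = Some (a n)"
proof -
  from assms obtain f where f: "\<And>n. pl (a n) (f n) = Some (a (Suc n))"
    unfolding pea_le_def by metis
  define d where "d n = (case n of 0 \<Rightarrow> a 0 | Suc k \<Rightarrow> f k)" for n
  have "psum pl d n = Some (a n)" for n by (induction n) (auto simp: d_def f)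
  then show thesis by (rule that)
qed

lemma sigma_sum_iff_sup:
  assumes "\<And>n. psum pl d n = Some (a n)"
  shows "sigma_sum pl d x \<longleftrightarrow> is_sup (pea_le pl) (range a) x"
proof -
  have "range (\<lambda>n. the (psum pl d n)) = range a" using assms by simp
  then show ?thesis using assms unfolding sigma_sum_def by simp
qed

lemma sigma_sum_partial_sums:
  assumes "sigma_sum pl c b"
  obtains bs where "\<And>n. psum pl c n = Some (bs n)"
    and "\<And>n. pea_le pl (bs n) (bs (Suc n))" and "is_sup (pea_le pl) (range bs) b"
proof
  define bs where "bs n = the (psum pl c n)" for n
  show psum_bs: "psum pl c n = Some (bs n)" for n
    using assms unfolding sigma_sum_def bs_def by auto
  show "pea_le pl (bs n) (bs (Suc n))" for n
    using psum_bs[of n] psum_bs[of "Suc n"] by (auto simp: pea_le_def)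
  show "is_sup (pea_le pl) (range bs) b"
    using assms unfolding sigma_sum_def bs_def by simp
qed

lemma sigma_sum_first_le:
  assumes "sigma_sum pl c b"
  shows "pea_le pl (c 0) b"
proof -
  have "pea_le pl (the (psum pl c 0)) b" using assms unfolding sigma_sum_def is_sup_def by blast
  then show ?thesis by simp
qed

lemma signed_measure_psum:
  assumes "signed_measure pl m" and "psum pl s n = Some t"
  shows "m t = (\<Sum>k\<le>n. m (s k))"
  using assms(2)
proof (induction n arbitrary: t)
  case (Suc n)
  then obtain t' where t': "psum pl s n = Some t'" "pl t' (s (Suc n)) = Some t"
    by (cases "psum pl s n") auto
  then show ?case using Suc.IH[OF t'(1)] assms(1) unfolding signed_measure_def by simp
qed simp

lemma measure_mono:
  assumes "is_measure pl m" and "pea_le pl a b"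
  shows "m a \<le> m b"
proof -
  obtain c where "pl a c = Some b" using assms(2) unfolding pea_le_def by blast
  then have "m b = m a + m c" using assms(1) unfolding is_measure_def signed_measure_def by blast
  moreover have "0 \<le> m c" using assms(1) unfolding is_measure_def by blast
  ultimately show ?thesis by linarith
qed

lemma jordan_signed_measure:
  assumes "m \<in> jordan pl"
  shows "signed_measure pl m"
  using assms unfolding jordan_def is_measure_def signed_measure_def by fastforce

lemma jordan_uminus:
  assumes "m \<in> jordan pl"
  shows "(\<lambda>a. - m a) \<in> jordan pl"
proof -
  obtain m1 m2 where "is_measure pl m1" "is_measure pl m2" "m = (\<lambda>a. m1 a - m2 a)"
    using assms unfolding jordan_def by blast
  then show ?thesis unfolding jordan_def by (intro CollectI exI[of _ m2] exI[of _ m1]) auto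
qed

lemma measure_jordan:
  assumes "is_measure pl m"
  shows "m \<in> jordan pl"
proof -
  have "is_measure pl (\<lambda>_. 0)" unfolding is_measure_def signed_measure_def by simp
  with assms show ?thesis unfolding jordan_def by force
qed

lemma sigma_additive_uminus:
  "sigma_additive pl m \<Longrightarrow> sigma_additive pl (\<lambda>a. - m a)"
  unfolding sigma_additive_def by (auto intro: tendsto_minus)

lemma sigma_additive_add:
  "sigma_additive pl m1 \<Longrightarrow> sigma_additive pl m2 \<Longrightarrow> sigma_additive pl (\<lambda>a. m1 a + m2 a)"
  unfolding sigma_additive_def by (auto intro: tendsto_add)

section \<open>The order of Jordan signed measures\<close>

lemma jle_antisym:
  assumes "jle pl p q" and "jle pl q p"
  shows "p = q"
proof
  fix a
  have "0 \<le> q a - p a" "0 \<le> p a - q a"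
    using assms unfolding jle_def is_measure_def by blast+
  then show "p a = q a" by linarith
qed

text \<open>Negation reverses the order; this reduces meets to joins.\<close>
lemma jle_uminus: "jle pl (\<lambda>a. - q a) (\<lambda>a. - p a) \<longleftrightarrow> jle pl p q"
proof -
  have "(\<lambda>a. - p a - - q a) = (\<lambda>a. q a - p a)" by auto
  then show ?thesis unfolding jle_def by simp
qed

lemma jsup_eqI:
  assumes "p \<in> jordan pl" and "jle pl m1 p" and "jle pl m2 p"
    and "\<And>q. q \<in> jordan pl \<Longrightarrow> jle pl m1 q \<Longrightarrow> jle pl m2 q \<Longrightarrow> jle pl p q"
  shows "jsup pl m1 m2 = p"
  unfolding jsup_def by (rule the_equality) (use assms jle_antisym in blast)+

lemma jinf_eqI:
  assumes "p \<in> jordan pl" and "jle pl p m1" and "jle pl p m2"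
    and "\<And>q. q \<in> jordan pl \<Longrightarrow> jle pl q m1 \<Longrightarrow> jle pl q m2 \<Longrightarrow> jle pl q p"
  shows "jinf pl m1 m2 = p"
  unfolding jinf_def by (rule the_equality) (use assms jle_antisym in blast)+

lemma jleI:
  assumes "signed_measure pl p" and "signed_measure pl q" and "\<And>a. p a \<le> q a"
  shows "jle pl p q"
  using assms unfolding jle_def is_measure_def signed_measure_def by fastforce

locale pseudo_effect_algebra =
  fixes pl :: "'a \<Rightarrow> 'a \<Rightarrow> 'a option" and z u :: 'a
  assumes pea: "pea pl z u"
begin

lemma assoc: "Option.bind (pl a b) (\<lambda>x. pl x c) = Option.bind (pl b c) (\<lambda>y. pl a y)"
  using pea unfolding pea_def by blast

lemma assoc_left:
  "pl a b = Some x \<Longrightarrow> pl x c = Some s \<Longrightarrow> \<exists>y. pl b c = Some y \<and> pl a y = Some s"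
  using assoc[of a b c] by (cases "pl b c") auto

lemma assoc_right:
  "pl b c = Some y \<Longrightarrow> pl a y = Some s \<Longrightarrow> \<exists>x. pl a b = Some x \<and> pl x c = Some s"
  using assoc[of a b c] by (cases "pl a b") auto

lemma swap_summand: "pl a b = Some s \<Longrightarrow> \<exists>e. pl b e = Some s"
  using pea unfolding pea_def by blast

lemma complements: "(\<exists>!d. pl a d = Some u) \<and> (\<exists>!e. pl e a = Some u)"
  using pea unfolding pea_def by blast

lemma unique_right_complement: "pl a d = Some u \<Longrightarrow> pl a d' = Some u \<Longrightarrow> d = d'"
  using complements by blast

lemma unique_left_complement: "pl e a = Some u \<Longrightarrow> pl e' a = Some u \<Longrightarrow> e = e'"
  using complements by blast

lemma only_zero_summable_with_unit: "pl u a \<noteq> None \<or> pl a u \<noteq> None \<Longrightarrow> a = z"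
  using pea unfolding pea_def by blast

lemma unit_plus_zero: "pl u z = Some u"
proof -
  obtain d where d: "pl u d = Some u" using complements by blast
  have "d = z" using d by (intro only_zero_summable_with_unit) simp
  with d show ?thesis by simp
qed

lemma zero_plus_unit: "pl z u = Some u"
proof -
  obtain e where e: "pl e u = Some u" using complements by blast
  have "e = z" using e by (intro only_zero_summable_with_unit) simp
  with e show ?thesis by simp
qed

lemma right_zero: "pl a z = Some a"
proof -
  obtain e where e: "pl e a = Some u" using complements by blast
  obtain y where y: "pl a z = Some y" "pl e y = Some u"
    using assoc_left[OF e unit_plus_zero] by blast
  with e have "y = a" using unique_right_complement by blast
  with y show ?thesis by simp
qed

lemma left_zero: "pl z a = Some a"
proof -
  obtain d where d: "pl a d = Some u" using complements by blast
  obtain x where x: "pl z a = Some x" "pl x d = Some u"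
    using assoc_right[OF d zero_plus_unit] by blast
  with d have "x = a" using unique_left_complement by blast
  with x show ?thesis by simp
qed

lemma le_refl: "pea_le pl a a"
  using right_zero unfolding pea_le_def by blast

lemma zero_le: "pea_le pl z a"
  using left_zero unfolding pea_le_def by blast

lemma signed_measure_zero:
  assumes "signed_measure pl m"
  shows "m z = 0"
proof -
  have "m z = m z + m z" using assms left_zero[of z] unfolding signed_measure_def by blast
  then show ?thesis by linarith
qed

lemma add_below:
  assumes "pea_le pl b1 a1" and "pea_le pl b2 a2" and s: "pl a1 a2 = Some s"
  obtains g where "pl b1 b2 = Some g" and "pea_le pl g s"
proof -
  obtain c1 where c1: "pl b1 c1 = Some a1" using assms(1) unfolding pea_le_def by blast
  obtain c2 where c2: "pl b2 c2 = Some a2" using assms(2) unfolding pea_le_def by blast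
  obtain y where y: "pl c1 a2 = Some y" "pl b1 y = Some s" using assoc_left[OF c1 s] by blast
  obtain w where w: "pl c1 b2 = Some w" "pl w c2 = Some y" using assoc_right[OF c2 y(1)] by blast
  obtain e where e: "pl b2 e = Some w" using swap_summand[OF w(1)] by blast
  obtain f where f: "pl b2 f = Some y" using assoc_left[OF e w(2)] by blast
  obtain g where g: "pl b1 b2 = Some g" "pl g f = Some s" using assoc_right[OF f y(2)] by blast
  from g(2) have "pea_le pl g s" unfolding pea_le_def by blast
  with g(1) show thesis by (rule that)
qed

end

locale sigma_rdp_pea = pseudo_effect_algebra +
  assumes sigma_rdp: "sigma_RDP pl"
begin

lemma sigma_rdpD:
  assumes "pl a1 a2 = Some x" and "sigma_sum pl b x"
  obtains c1 c2 where "sigma_sum pl c1 a1" and "sigma_sum pl c2 a2"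
    and "\<And>n. pl (c1 n) (c2 n) = Some (b n)"
  using sigma_rdp[unfolded sigma_RDP_def, rule_format, OF conjI[OF assms]] that by blast

text \<open>Apply sigma-(RDP) to the chain b \<le> s \<le> s \<le> ... and keep the first
  terms of the two resulting decompositions.\<close>
lemma riesz_decomposition:
  assumes bc: "pl b c = Some s" and a12: "pl a1 a2 = Some s"
  obtains b1 b2 where "pl b1 b2 = Some b" and "pea_le pl b1 a1" and "pea_le pl b2 a2"
proof -
  define ch where "ch n = (if n = 0 then b else s)" for n :: nat
  have chain: "pea_le pl (ch n) (ch (Suc n))" for n
    using bc le_refl unfolding ch_def pea_le_def by auto
  obtain d where d: "\<And>n. psum pl d n = Some (ch n)"
    using increments_of_chain[of pl ch] chain by blast
  have "is_sup (pea_le pl) (range ch) s"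
    unfolding is_sup_def
  proof (intro conjI allI impI ballI)
    fix x assume "x \<in> range ch"
    then show "pea_le pl x s" using bc le_refl unfolding ch_def pea_le_def by auto
  next
    fix v assume "\<forall>x\<in>range ch. pea_le pl x v"
    then have "pea_le pl (ch 1) v" by blast
    then show "pea_le pl s v" unfolding ch_def by simp
  qed
  then have "sigma_sum pl d s" using sigma_sum_iff_sup[OF d] by blast
  then obtain c1 c2 where s1: "sigma_sum pl c1 a1" and s2: "sigma_sum pl c2 a2"
    and cd: "\<And>n. pl (c1 n) (c2 n) = Some (d n)"
    using sigma_rdpD[OF a12] by blast
  have "pl (c1 0) (c2 0) = Some b" using cd[of 0] d[of 0] by (simp add: ch_def)
  moreover have "pea_le pl (c1 0) a1" "pea_le pl (c2 0) a2"
    using sigma_sum_first_le[OF s1] sigma_sum_first_le[OF s2] .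
  ultimately show thesis by (rule that)
qed

lemma sigma_sum_below:
  assumes "sigma_sum pl d x" and "pea_le pl b x"
  obtains c where "sigma_sum pl c b" and "\<And>n. pea_le pl (c n) (d n)"
proof -
  obtain e where "pl b e = Some x" using assms(2) unfolding pea_le_def by blast
  then obtain c1 c2 where c1: "sigma_sum pl c1 b" and "\<And>n. pl (c1 n) (c2 n) = Some (d n)"
    using sigma_rdpD assms(1) by blast
  then have "pea_le pl (c1 n) (d n)" for n unfolding pea_le_def by blast
  with c1 show thesis by (rule that)
qed

section \<open>The upper variation of a Jordan signed measure\<close>

definition upper_var :: "('a \<Rightarrow> real) \<Rightarrow> 'a \<Rightarrow> real" where
  "upper_var m a = Sup {m b | b. pea_le pl b a}"

text \<open>The supremum is finite: if m = m1 - m2 then m b \<le> m1 a for all b \<le> a.\<close>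
lemma jordan_bdd_above:
  assumes "m \<in> jordan pl"
  shows "bdd_above {m b | b. pea_le pl b a}"
proof -
  obtain m1 m2 where h: "is_measure pl m1" "is_measure pl m2" "m = (\<lambda>a. m1 a - m2 a)"
    using assms unfolding jordan_def by blast
  have "m b \<le> m1 a" if "pea_le pl b a" for b
  proof -
    have "m1 b \<le> m1 a" using measure_mono[OF h(1) that] .
    moreover have "0 \<le> m2 b" using h(2) unfolding is_measure_def by blast
    ultimately show ?thesis using h(3) by simp
  qed
  then show ?thesis unfolding bdd_above_def by blast
qed

lemma upper_var_upper:
  assumes "m \<in> jordan pl" and "pea_le pl b a"
  shows "m b \<le> upper_var m a"
  unfolding upper_var_def
proof (rule cSup_upper)
  show "m b \<in> {m b | b. pea_le pl b a}" using assms(2) by blast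
qed (rule jordan_bdd_above[OF assms(1)])

lemma upper_var_least:
  assumes "\<And>b. pea_le pl b a \<Longrightarrow> m b \<le> y"
  shows "upper_var m a \<le> y"
  unfolding upper_var_def using assms le_refl by (blast intro: cSup_least)

lemma upper_var_ge: "m \<in> jordan pl \<Longrightarrow> m a \<le> upper_var m a"
  using upper_var_upper le_refl by blast

lemma upper_var_nonneg:
  assumes "m \<in> jordan pl"
  shows "0 \<le> upper_var m a"
  using upper_var_upper[OF assms zero_le] signed_measure_zero[OF jordan_signed_measure[OF assms]]
  by simp

text \<open>Additivity: "\<le>" by Riesz decomposition, "\<ge>" by monotonicity of addition.\<close>
lemma upper_var_add:
  assumes mj: "m \<in> jordan pl" and s: "pl a1 a2 = Some s"
  shows "upper_var m s = upper_var m a1 + upper_var m a2"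
proof -
  have sm: "signed_measure pl m" using jordan_signed_measure[OF mj] .
  have "upper_var m s \<le> upper_var m a1 + upper_var m a2"
  proof (rule upper_var_least)
    fix b assume "pea_le pl b s"
    then obtain c where "pl b c = Some s" unfolding pea_le_def by blast
    then obtain b1 b2 where "pl b1 b2 = Some b" "pea_le pl b1 a1" "pea_le pl b2 a2"
      using riesz_decomposition s by blast
    then have "m b = m b1 + m b2" "m b1 \<le> upper_var m a1" "m b2 \<le> upper_var m a2"
      using sm upper_var_upper[OF mj] unfolding signed_measure_def by blast+
    then show "m b \<le> upper_var m a1 + upper_var m a2" by linarith
  qed
  moreover have "upper_var m a1 \<le> upper_var m s - upper_var m a2"
  proof (rule upper_var_least)
    fix b1 assume b1: "pea_le pl b1 a1"
    have "m b2 \<le> upper_var m s - m b1" if b2: "pea_le pl b2 a2" for b2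
    proof -
      obtain g where "pl b1 b2 = Some g" "pea_le pl g s" using add_below[OF b1 b2 s] .
      then have "m g = m b1 + m b2" "m g \<le> upper_var m s"
        using sm upper_var_upper[OF mj] unfolding signed_measure_def by blast+
      then show ?thesis by linarith
    qed
    then have "upper_var m a2 \<le> upper_var m s - m b1" by (rule upper_var_least)
    then show "m b1 \<le> upper_var m s - upper_var m a2" by linarith
  qed
  ultimately show ?thesis by linarith
qed

lemma upper_var_measure: "m \<in> jordan pl \<Longrightarrow> is_measure pl (upper_var m)"
  unfolding is_measure_def signed_measure_def using upper_var_add upper_var_nonneg by blast

lemma upper_var_mono: "m \<in> jordan pl \<Longrightarrow> pea_le pl a b \<Longrightarrow> upper_var m a \<le> upper_var m b"
  using measure_mono[OF upper_var_measure] by blast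

lemma upper_var_jordan: "m \<in> jordan pl \<Longrightarrow> upper_var m \<in> jordan pl"
  using measure_jordan upper_var_measure by blast

lemma upper_var_above:
  assumes mj: "m \<in> jordan pl"
  shows "jle pl m (upper_var m)"
  using jleI[OF jordan_signed_measure[OF mj] _ upper_var_ge[OF mj]] upper_var_measure[OF mj]
  unfolding is_measure_def by blast

lemma upper_var_above_zero: "m \<in> jordan pl \<Longrightarrow> jle pl (\<lambda>_. 0) (upper_var m)"
  using upper_var_measure unfolding jle_def by simp

lemma upper_var_least_upper_bound:
  assumes mj: "m \<in> jordan pl" and q: "q \<in> jordan pl" "jle pl m q" "jle pl (\<lambda>_. 0) q"
  shows "jle pl (upper_var m) q"
proof (rule jleI)
  show "signed_measure pl (upper_var m)"
    using upper_var_measure[OF mj] unfolding is_measure_def ..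
  show sq: "signed_measure pl q" using jordan_signed_measure[OF q(1)] .
  fix a show "upper_var m a \<le> q a"
  proof (rule upper_var_least)
    fix b assume "pea_le pl b a"
    then obtain c where "pl b c = Some a" unfolding pea_le_def by blast
    then have "q a = q b + q c" using sq unfolding signed_measure_def by blast
    moreover have "0 \<le> q b - m b" "0 \<le> q c - 0"
      using q(2,3) unfolding jle_def is_measure_def by blast+
    ultimately show "m b \<le> q a" by linarith
  qed
qed

lemma jpos_eq_upper_var:
  assumes mj: "m \<in> jordan pl"
  shows "jpos pl m = upper_var m"
  unfolding jpos_def
proof (rule jsup_eqI)
  fix q assume "q \<in> jordan pl" "jle pl m q" "jle pl (\<lambda>_. 0) q"
  then show "jle pl (upper_var m) q" using upper_var_least_upper_bound[OF mj] by blast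
qed (use mj upper_var_jordan upper_var_above upper_var_above_zero in blast)+

text \<open>Dually, m^- is the upper variation of -m, by negating the order.\<close>
lemma jneg_eq_upper_var:
  assumes mj: "m \<in> jordan pl"
  shows "jneg pl m = upper_var (\<lambda>b. - m b)"
proof -
  define p where "p = upper_var (\<lambda>b. - m b)"
  have nmj: "(\<lambda>b. - m b) \<in> jordan pl" using jordan_uminus[OF mj] .
  have "jinf pl m (\<lambda>_. 0) = (\<lambda>a. - p a)"
  proof (rule jinf_eqI)
    show "(\<lambda>a. - p a) \<in> jordan pl" unfolding p_def using jordan_uminus upper_var_jordan nmj by blast
    show "jle pl (\<lambda>a. - p a) m"
      using upper_var_above[OF nmj] jle_uminus[where q = p and p = "\<lambda>a. - m a"] unfolding p_def by simp
    show "jle pl (\<lambda>a. - p a) (\<lambda>_. 0)"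
      using upper_var_above_zero[OF nmj] jle_uminus[where q = p and p = "\<lambda>_. 0"] unfolding p_def by simp
    fix q assume "q \<in> jordan pl" "jle pl q m" "jle pl q (\<lambda>_. 0)"
    then have "jle pl p (\<lambda>a. - q a)"
      using upper_var_least_upper_bound[OF nmj jordan_uminus] jle_uminus[where p = q and q = m]
        jle_uminus[where p = q and q = "\<lambda>_. 0"] unfolding p_def by simp
    then show "jle pl q (\<lambda>a. - p a)" using jle_uminus[where p = q and q = "\<lambda>a. - p a"] by simp
  qed
  then show ?thesis unfolding jneg_def p_def by simp
qed

section \<open>Sigma-additivity of the upper variation\<close>

text \<open>If a n increases to x and b \<le> x, then every level y < m b is eventually
  exceeded by m^up(a n): split b along the increments of the chain and use
  sigma-additivity of m on the partial sums of the pieces.\<close>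
lemma upper_var_eventually_above:
  assumes mj: "m \<in> jordan pl" and sa: "sigma_additive pl m"
    and inc: "\<And>n. pea_le pl (a n) (a (Suc n))" and sup: "is_sup (pea_le pl) (range a) x"
    and bx: "pea_le pl b x" and mb: "y < m b"
  shows "\<forall>\<^sub>F n in sequentially. y < upper_var m (a n)"
proof -
  obtain d where d: "\<And>n. psum pl d n = Some (a n)" using increments_of_chain[of pl a] inc by blast
  have "sigma_sum pl d x" using sigma_sum_iff_sup[OF d] sup by blast
  then obtain c where c: "sigma_sum pl c b" and cd: "\<And>n. pea_le pl (c n) (d n)"
    using sigma_sum_below bx by blast
  obtain bs where bs: "\<And>n. psum pl c n = Some (bs n)"
    and inc_bs: "\<And>n. pea_le pl (bs n) (bs (Suc n))" and sup_bs: "is_sup (pea_le pl) (range bs) b"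
    using sigma_sum_partial_sums[OF c] by blast
  have "(\<lambda>n. m (bs n)) \<longlonglongrightarrow> m b" using sa inc_bs sup_bs unfolding sigma_additive_def by blast
  then have eventually_above: "\<forall>\<^sub>F n in sequentially. y < m (bs n)"
    using mb by (rule order_tendstoD(1))
  have bs_below: "m (bs n) \<le> upper_var m (a n)" for n
  proof -
    have "m (bs n) = (\<Sum>k\<le>n. m (c k))"
      using signed_measure_psum[OF jordan_signed_measure[OF mj] bs] .
    also have "\<dots> \<le> (\<Sum>k\<le>n. upper_var m (d k))"
      using upper_var_upper[OF mj cd] by (rule sum_mono)
    also have "\<dots> = upper_var m (a n)"
      using signed_measure_psum[OF _ d] upper_var_measure[OF mj] unfolding is_measure_def by simp
    finally show ?thesis .
  qed
  show ?thesis using eventually_above by (rule eventually_mono) (meson bs_below less_le_trans)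
qed

text \<open>m^up(a n) is bounded by m^up(x) by monotonicity and eventually exceeds
  every level below it by the previous lemma.\<close>
lemma upper_var_sigma_additive:
  assumes mj: "m \<in> jordan pl" and sa: "sigma_additive pl m"
  shows "sigma_additive pl (upper_var m)"
  unfolding sigma_additive_def
proof (intro allI impI, elim conjE)
  fix a x assume inc: "\<forall>n. pea_le pl (a n) (a (Suc n))" and sup: "is_sup (pea_le pl) (range a) x"
  have below: "upper_var m (a n) \<le> upper_var m x" for n
    using upper_var_mono[OF mj] sup unfolding is_sup_def by blast
  show "(\<lambda>n. upper_var m (a n)) \<longlonglongrightarrow> upper_var m x"
  proof (rule order_tendstoI)
    fix y assume "y < upper_var m x"
    then obtain b where "pea_le pl b x" "y < m b"
      using upper_var_least[of x m y] by force
    then show "\<forall>\<^sub>F n in sequentially. y < upper_var m (a n)"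
      using upper_var_eventually_above[OF mj sa] inc sup by blast
  next
    fix y assume "upper_var m x < y"
    then have "upper_var m (a n) < y" for n using below[of n] by linarith
    then show "\<forall>\<^sub>F n in sequentially. upper_var m (a n) < y" by simp
  qed
qed

end

theorem proposition4p6:
  fixes pl :: "'a \<Rightarrow> 'a \<Rightarrow> 'a option" and z u :: 'a and m :: "'a \<Rightarrow> real"
  assumes "pea pl z u"
    and "sigma_RDP pl"
    and "m \<in> jordan pl"
    and "sigma_additive pl m"
  shows "sigma_additive pl (jpos pl m) \<and> sigma_additive pl (jneg pl m) \<and>
         sigma_additive pl (jabs pl m)"
proof -
  interpret sigma_rdp_pea pl z u using assms(1,2) by unfold_locales
  have pos: "sigma_additive pl (jpos pl m)"
    using jpos_eq_upper_var upper_var_sigma_additive assms(3,4) by simp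
  have neg: "sigma_additive pl (jneg pl m)"
    unfolding jneg_eq_upper_var[OF assms(3)]
    using upper_var_sigma_additive[OF jordan_uminus sigma_additive_uminus] assms(3,4) .
  have "sigma_additive pl (jabs pl m)"
    unfolding jabs_def using sigma_additive_add[OF pos neg] .
  with pos neg show ?thesis by blast
qed

end
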